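(* Let $n\ge4$ be even, let $f=\mathrm{Jump}_{n/2-1}$, and let $k\in\{1,\dots,n/2-1\}$. Consider the procedure $\mathrm{moveFirst}_k(x,y)$ defined as follows: repeat (outer loop) — sample $x'$ from $x$ by flipping one position chosen uniformly at random among the positions where $x$ and $y$ agree; then perform up to $\lfloor 2\log_2 n\rfloor+1$ tests, each sampling $u$ from $x'$ by flipping $k-1$ positions chosen uniformly at random (without repetition) among the positions where $x'$ and $y$ differ and querying $f(u)$; if some test gives $f(u)=n/2$, stop the tests and restart the outer loop; if no test gives $f(u)=n/2$, return $x'$. Then $\mathrm{moveFirst}_k$ uses only binary unbiased variation operators, and if $(x,y)$ is an opposing $k$-pair, the following hold. (i) Let $X$ be a geometric random variable with success probability $1/2$ (number of trials up to and including the first success) and let $T$ be the number of fitness evaluations of one run; then $T$ is stochastically dominated by $(1+2\log_2 n)X$, also when conditioning on the output satisfying $d(x')=k+1$. (ii) With probability at least $1-(2\log_2 n)/n^2$, the output $x'$ satisfies $d(x')=k+1$, $H(x,x')=1$, and $H(x',y)=2k+1$.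
   Context: For $x\in\{0,1\}^n$ let $|x|_1=\sum_ix_i$ and $H$ the Hamming distance. For $n$ even, $\mathrm{Jump}_{n/2-1}(x)=n$ if $|x|_1=n$, $=n/2$ if $|x|_1=n/2$, and $=0$ otherwise. Let $d(x)=\big||x|_1-n/2\big|$ and $\mathrm{sgn}(x)\in\{-1,0,+1\}$ the sign of $|x|_1-n/2$. A pair $(x,y)$ is an opposing $k$-pair if $\mathrm{sgn}(x)\,\mathrm{sgn}(y)=-1$, $d(x)=d(y)=k$, and $H(x,y)=2k$. A binary unbiased variation operator samples from a family $(D(\cdot\mid y^{(1)},y^{(2)}))$ of distributions on $\{0,1\}^n$ invariant under XOR-ing all arguments with a common $z$ and under applying a common permutation of positions to all arguments. *)

theory Defs
  imports "HOL-Probability.Probability"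
begin

text \<open>Bit strings in {0,1}^n are modelled as bool lists of length n (True = 1).\<close>

definition ones :: "bool list \<Rightarrow> nat" where
  "ones x = length (filter id x)"

definition hamming :: "bool list \<Rightarrow> bool list \<Rightarrow> nat" where
  "hamming x y = card {i. i < length x \<and> x ! i \<noteq> y ! i}"

definition jumpf :: "nat \<Rightarrow> bool list \<Rightarrow> nat" where
  "jumpf n x = (if ones x = n then n else if ones x = n div 2 then n div 2 else 0)"

definition dd :: "nat \<Rightarrow> bool list \<Rightarrow> nat" where
  "dd n x = nat \<bar>int (ones x) - int (n div 2)\<bar>"

definition sgnh :: "nat \<Rightarrow> bool list \<Rightarrow> int" where
  "sgnh n x = sgn (int (ones x) - int (n div 2))"

definition opposing_pair :: "nat \<Rightarrow> nat \<Rightarrow> bool list \<Rightarrow> bool list \<Rightarrow> bool" where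
  "opposing_pair n k x y \<longleftrightarrow> length x = n \<and> length y = n \<and>
     sgnh n x * sgnh n y = -1 \<and> dd n x = k \<and> dd n y = k \<and> hamming x y = 2 * k"

definition flip :: "nat set \<Rightarrow> bool list \<Rightarrow> bool list" where
  "flip S x = map (\<lambda>i. x ! i \<noteq> (i \<in> S)) [0..<length x]"

definition xorl :: "bool list \<Rightarrow> bool list \<Rightarrow> bool list" where
  "xorl z x = map2 (\<noteq>) z x"

definition permute :: "(nat \<Rightarrow> nat) \<Rightarrow> bool list \<Rightarrow> bool list" where
  "permute \<sigma> x = map (\<lambda>i. x ! \<sigma> i) [0..<length x]"

definition unbiased2 :: "nat \<Rightarrow> (bool list \<Rightarrow> bool list \<Rightarrow> bool list pmf) \<Rightarrow> bool" where
  "unbiased2 n D \<longleftrightarrow>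
     (\<forall>x y. length x = n \<longrightarrow> length y = n \<longrightarrow> set_pmf (D x y) \<subseteq> {u. length u = n}) \<and>
     (\<forall>x y z. length x = n \<longrightarrow> length y = n \<longrightarrow> length z = n \<longrightarrow>
        map_pmf (xorl z) (D x y) = D (xorl z x) (xorl z y)) \<and>
     (\<forall>x y \<sigma>. length x = n \<longrightarrow> length y = n \<longrightarrow> \<sigma> permutes {..<n} \<longrightarrow>
        map_pmf (permute \<sigma>) (D x y) = D (permute \<sigma> x) (permute \<sigma> y))"

definition flip_agree :: "bool list \<Rightarrow> bool list \<Rightarrow> bool list pmf" where
  "flip_agree x y = (let A = {i. i < length x \<and> x ! i = y ! i} in
     if A = {} then return_pmf x else map_pmf (\<lambda>i. flip {i} x) (pmf_of_set A))"

definition flip_differ :: "nat \<Rightarrow> bool list \<Rightarrow> bool list \<Rightarrow> bool list pmf" where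
  "flip_differ m x y = (let Ss = {S. S \<subseteq> {i. i < length x \<and> x ! i \<noteq> y ! i} \<and> card S = m} in
     if Ss = {} then return_pmf x else map_pmf (\<lambda>S. flip S x) (pmf_of_set Ss))"

text \<open>Up to j tests: result (some test gave f(u) = n/2, number of fitness evaluations).\<close>
fun tests :: "nat \<Rightarrow> nat \<Rightarrow> bool list \<Rightarrow> bool list \<Rightarrow> nat \<Rightarrow> (bool \<times> nat) pmf" where
  "tests n k x' y 0 = return_pmf (False, 0)"
| "tests n k x' y (Suc j) = do {
     u \<leftarrow> flip_differ (k - 1) x' y;
     if jumpf n u = n div 2 then return_pmf (True, 1)
     else map_pmf (\<lambda>(b, c). (b, Suc c)) (tests n k x' y j) }"

definition num_tests :: "nat \<Rightarrow> nat" where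
  "num_tests n = nat \<lfloor>2 * log 2 (real n)\<rfloor> + 1"

text \<open>moveFirst_k with an accumulator t of fitness evaluations so far; outputs (x', T).\<close>
partial_function (spmf) mf_loop ::
  "nat \<Rightarrow> nat \<Rightarrow> bool list \<Rightarrow> bool list \<Rightarrow> nat \<Rightarrow> (bool list \<times> nat) spmf" where
  "mf_loop n k x y t = do {
     x' \<leftarrow> spmf_of_pmf (flip_agree x y);
     (b, c) \<leftarrow> spmf_of_pmf (tests n k x' y (num_tests n));
     if b then mf_loop n k x y (t + c) else return_spmf (x', t + c) }"

definition moveFirst :: "nat \<Rightarrow> nat \<Rightarrow> bool list \<Rightarrow> bool list \<Rightarrow> (bool list \<times> nat) spmf" where
  "moveFirst n k x y = mf_loop n k x y 0"

end

theory Submission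
  imports Defs
begin

text \<open>
  One outer iteration of moveFirst flips a uniformly random position where \<open>x\<close> and
  \<open>y\<close> agree.  For an opposing \<open>k\<close>-pair these positions split evenly: an outward flip (away
  from the middle level) yields the desired string, and then no test can reach the plateau
  \<open>|u|\<^sub>1 = n/2\<close>; an inward flip moves one level towards the middle, and then each test
  reaches the plateau with probability at least \<open>1/2\<close>.  So a round restarts with probability at most \<open>1/2\<close>,
  costs at most \<open>1 + 2 log\<^sub>2 n\<close> evaluations, and ends on a wrong string with probability at
  most \<open>(1/2) ^ num_tests n \<le> 1/n\<^sup>2\<close>.
\<close>

lemma length_flip [simp]: "length (flip S x) = length x"
  by (simp add: flip_def)

lemma nth_flip [simp]: "i < length x \<Longrightarrow> flip S x ! i = (x ! i \<noteq> (i \<in> S))"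
  by (simp add: flip_def)

lemma ones_card: "ones x = card {i. i < length x \<and> x ! i}"
  unfolding ones_def length_filter_conv_card by simp

lemma finite_below [simp]: "finite {i. i < (n::nat) \<and> P i}"
  by (rule finite_subset[of _ "{..<n}"]) auto

lemma card_split:
  "card {i. i < (n::nat) \<and> P i} = card {i. i < n \<and> P i \<and> Q i} + card {i. i < n \<and> P i \<and> \<not> Q i}"
proof -
  have "{i. i < n \<and> P i} = {i. i < n \<and> P i \<and> Q i} \<union> {i. i < n \<and> P i \<and> \<not> Q i}" by blast
  then show ?thesis by (simp add: card_Un_disjoint[symmetric]) (subst card_Un_disjoint; auto)
qed

lemma ones_flip_uniform:
  assumes S: "S \<subseteq> {..<length z}" and w: "\<forall>j\<in>S. z ! j = w"
  shows "int (ones (flip S z)) = int (ones z) + (if w then - int (card S) else int (card S))"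
proof -
  define X where "X = {j. j < length z \<and> z ! j}"
  have fin: "finite X" "finite S" using S finite_subset unfolding X_def by auto
  have flipped: "{j. j < length z \<and> flip S z ! j} = (if w then X - S else X \<union> S)"
    using S w unfolding X_def by auto
  show ?thesis
  proof (cases w)
    case True
    then have "S \<subseteq> X" using S w unfolding X_def by auto
    then show ?thesis
      using True fin flipped by (simp add: ones_card X_def[symmetric] card_Diff_subset card_mono of_nat_diff)
  next
    case False
    then have "X \<inter> S = {}" using w unfolding X_def by auto
    then show ?thesis using False fin flipped by (simp add: ones_card X_def[symmetric] card_Un_disjoint)
  qed
qed

subsection \<open>Unbiasedness of the two variation operators\<close>

lemma length_xorl [simp]: "length (xorl z x) = min (length z) (length x)"
  by (simp add: xorl_def)

lemma nth_xorl [simp]: "i < length z \<Longrightarrow> i < length x \<Longrightarrow> xorl z x ! i = (z ! i \<noteq> x ! i)"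
  by (simp add: xorl_def)

lemma length_permute [simp]: "length (permute s x) = length x"
  by (simp add: permute_def)

lemma nth_permute [simp]: "i < length x \<Longrightarrow> permute s x ! i = x ! s i"
  by (simp add: permute_def)

lemma xorl_flip: "length z = length x \<Longrightarrow> xorl z (flip S x) = flip S (xorl z x)"
  by (rule nth_equalityI) auto

lemma permute_flip:
  assumes s: "s permutes {..<n}" and "length x = n"
  shows "permute s (flip S x) = flip (inv s ` S) (permute s x)"
proof (rule nth_equalityI)
  fix j assume j: "j < length (permute s (flip S x))"
  have "s j < n" using j assms permutes_in_image[OF s] by auto
  moreover have "(j \<in> inv s ` S) = (s j \<in> S)"
    using permutes_inverses[OF s] by (metis image_iff)
  ultimately show "permute s (flip S x) ! j = flip (inv s ` S) (permute s x) ! j"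
    using j assms by simp
qed simp

lemma positions_permute:
  assumes s: "s permutes {..<n}" and l: "length x = n" "length y = n"
  shows "{i. i < length (permute s x) \<and> R (permute s x ! i) (permute s y ! i)}
       = inv s ` {i. i < length x \<and> R (x ! i) (y ! i)}"
proof -
  have "{i. i < length (permute s x) \<and> R (permute s x ! i) (permute s y ! i)}
      = s -` {i. i < length x \<and> R (x ! i) (y ! i)}"
  proof (rule set_eqI)
    fix i
    have "s i < n \<longleftrightarrow> i < n" using permutes_in_image[OF s, of i] by simp
    then show "i \<in> {i. i < length (permute s x) \<and> R (permute s x ! i) (permute s y ! i)}
           \<longleftrightarrow> i \<in> s -` {i. i < length x \<and> R (x ! i) (y ! i)}"
      using l by auto
  qed
  also have "\<dots> = inv s ` {i. i < length x \<and> R (x ! i) (y ! i)}"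
    by (rule bij_vimage_eq_inv_image[OF permutes_bij[OF s]])
  finally show ?thesis .
qed

text \<open>Both operators only depend on which positions agree, so they are unbiased.\<close>
lemma unbiased_flip_agree: "unbiased2 n flip_agree"
  unfolding unbiased2_def
proof (intro conjI allI impI)
  fix x y :: "bool list" assume "length x = n" "length y = n"
  then show "set_pmf (flip_agree x y) \<subseteq> {u. length u = n}"
    by (auto simp: flip_agree_def Let_def split: if_splits)
next
  fix x y z :: "bool list" assume l: "length x = n" "length y = n" "length z = n"
  have A: "{i. i < length (xorl z x) \<and> xorl z x ! i = xorl z y ! i} = {i. i < length x \<and> x ! i = y ! i}"
    using l by auto
  show "map_pmf (xorl z) (flip_agree x y) = flip_agree (xorl z x) (xorl z y)"
    unfolding flip_agree_def Let_def A if_distrib[of "map_pmf (xorl z)"] map_return_pmf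
      pmf.map_comp o_def xorl_flip[OF trans[OF l(3) l(1)[symmetric]]] ..
next
  fix x y :: "bool list" and s assume l: "length x = n" "length y = n" and s: "s permutes {..<n}"
  define A where "A = {i. i < length x \<and> x ! i = y ! i}"
  have A': "{i. i < length (permute s x) \<and> permute s x ! i = permute s y ! i} = inv s ` A"
    unfolding A_def by (rule positions_permute[OF s l])
  have fin: "finite A" by (simp add: A_def)
  have inj: "inj_on (inv s) A" using permutes_inj[OF permutes_inv[OF s]] by (simp add: inj_on_def inj_def)
  show "map_pmf (permute s) (flip_agree x y) = flip_agree (permute s x) (permute s y)"
  proof (cases "A = {}")
    case True then show ?thesis unfolding flip_agree_def Let_def A' A_def[symmetric] by simp
  next
    case False
    have "flip_agree (permute s x) (permute s y) = map_pmf (\<lambda>i. flip {i} (permute s x)) (pmf_of_set (inv s ` A))"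
      unfolding flip_agree_def Let_def A' using False by simp
    also have "\<dots> = map_pmf (\<lambda>i. flip {inv s i} (permute s x)) (pmf_of_set A)"
      by (simp add: map_pmf_of_set_inj[OF inj False fin, symmetric] pmf.map_comp o_def)
    also have "\<dots> = map_pmf (permute s) (flip_agree x y)"
      unfolding flip_agree_def Let_def A_def[symmetric] using False
      by (simp add: pmf.map_comp o_def permute_flip[OF s l(1)])
    finally show ?thesis ..
  qed
qed

lemma unbiased_flip_differ: "unbiased2 n (flip_differ m)"
  unfolding unbiased2_def
proof (intro conjI allI impI)
  fix x y :: "bool list" assume "length x = n" "length y = n"
  then show "set_pmf (flip_differ m x y) \<subseteq> {u. length u = n}"
    unfolding flip_differ_def Let_def
    by (auto split: if_splits simp: set_pmf_of_set finite_subset[of _ "{i. i < length x}"])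
next
  fix x y z :: "bool list" assume l: "length x = n" "length y = n" "length z = n"
  have D: "{i. i < length (xorl z x) \<and> xorl z x ! i \<noteq> xorl z y ! i} = {i. i < length x \<and> x ! i \<noteq> y ! i}"
    using l by auto
  show "map_pmf (xorl z) (flip_differ m x y) = flip_differ m (xorl z x) (xorl z y)"
    unfolding flip_differ_def Let_def D if_distrib[of "map_pmf (xorl z)"] map_return_pmf
      pmf.map_comp o_def xorl_flip[OF trans[OF l(3) l(1)[symmetric]]] ..
next
  fix x y :: "bool list" and s assume l: "length x = n" "length y = n" and s: "s permutes {..<n}"
  define D where "D = {i. i < length x \<and> x ! i \<noteq> y ! i}"
  define Ss where "Ss = {S. S \<subseteq> D \<and> card S = m}"
  have bij: "bij (inv s)" by (rule permutes_bij[OF permutes_inv[OF s]])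
  have D': "{i. i < length (permute s x) \<and> permute s x ! i \<noteq> permute s y ! i} = inv s ` D"
    unfolding D_def by (rule positions_permute[OF s l])
  have Ss': "{S. S \<subseteq> inv s ` D \<and> card S = m} = image (inv s) ` Ss"
  proof (intro equalityI subsetI)
    fix S assume "S \<in> {S. S \<subseteq> inv s ` D \<and> card S = m}"
    then have S: "S \<subseteq> inv s ` D" "card S = m" by auto
    have "S = inv s ` (s ` S)" using permutes_inverses[OF s] by (auto simp: image_iff)
    moreover have "s ` S \<subseteq> D" using S(1) permutes_inverses[OF s] by auto
    moreover have "card (s ` S) = m" using S(2) permutes_inj[OF s]
      by (simp add: card_image inj_on_def inj_def)
    ultimately show "S \<in> image (inv s) ` Ss" unfolding Ss_def by blast
  next
    fix S assume "S \<in> image (inv s) ` Ss"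
    then show "S \<in> {S. S \<subseteq> inv s ` D \<and> card S = m}" using bij
      by (auto simp: Ss_def card_image bij_def inj_on_def inj_def)
  qed
  have fin: "finite Ss" unfolding Ss_def by (rule finite_subset[of _ "Pow D"]) (auto simp: D_def)
  have inj: "inj_on (image (inv s)) Ss" using bij by (simp add: bij_def inj_image_eq_iff inj_on_def)
  show "map_pmf (permute s) (flip_differ m x y) = flip_differ m (permute s x) (permute s y)"
  proof (cases "Ss = {}")
    case True then show ?thesis unfolding flip_differ_def Let_def D' Ss' D_def[symmetric] Ss_def[symmetric] by simp
  next
    case False
    have "flip_differ m (permute s x) (permute s y) = map_pmf (\<lambda>S. flip S (permute s x)) (pmf_of_set (image (inv s) ` Ss))"
      unfolding flip_differ_def Let_def D' Ss' using False by simp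
    also have "\<dots> = map_pmf (\<lambda>S. flip (inv s ` S) (permute s x)) (pmf_of_set Ss)"
      by (simp add: map_pmf_of_set_inj[OF inj False fin, symmetric] pmf.map_comp o_def)
    also have "\<dots> = map_pmf (permute s) (flip_differ m x y)"
      unfolding flip_differ_def Let_def D_def[symmetric] Ss_def[symmetric] using False
      by (simp add: pmf.map_comp o_def permute_flip[OF s l(1)])
    finally show ?thesis ..
  qed
qed

lemma integrable_pmf_bounded:
  "(\<And>\<omega>. \<bar>f \<omega>\<bar> \<le> B) \<Longrightarrow> integrable (measure_pmf M) (f :: _ \<Rightarrow> real)"
  by (rule measure_pmf.integrable_const_bound[where B=B]) auto

lemma prob_bind_pmf:
  "measure_pmf.prob (bind_pmf M f) A = (\<integral>\<omega>. measure_pmf.prob (f \<omega>) A \<partial>M)"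
proof -
  have "ennreal (measure_pmf.prob (bind_pmf M f) A) = (\<integral>\<^sup>+\<omega>. ennreal (measure_pmf.prob (f \<omega>) A) \<partial>M)"
    by (simp add: measure_pmf.emeasure_eq_measure[symmetric])
  also have "\<dots> = ennreal (\<integral>\<omega>. measure_pmf.prob (f \<omega>) A \<partial>M)"
    by (rule nn_integral_eq_integral) (auto intro: integrable_pmf_bounded[where B=1])
  finally show ?thesis by (subst (asm) ennreal_inj) (auto intro: integral_nonneg_AE)
qed

lemma integral_mono_on_support:
  assumes "\<And>\<omega>. \<omega> \<in> set_pmf M \<Longrightarrow> f \<omega> \<le> g \<omega>" "\<And>\<omega>. \<bar>f \<omega>\<bar> \<le> Bf" "\<And>\<omega>. \<bar>g \<omega>\<bar> \<le> Bg"
  shows "(\<integral>\<omega>. f \<omega> \<partial>M) \<le> (\<integral>\<omega>. (g \<omega> :: real) \<partial>M)"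
  by (rule integral_mono_AE)
    (use assms in \<open>auto intro: integrable_pmf_bounded simp: AE_measure_pmf_iff\<close>)

lemma prob_bind_pmf_le:
  assumes "\<And>a. a \<in> set_pmf M \<Longrightarrow> measure_pmf.prob (f a) A \<le> c"
  shows "measure_pmf.prob (bind_pmf M f) A \<le> c"
proof -
  have "measure_pmf.prob (bind_pmf M f) A \<le> (\<integral>a. c \<partial>M)"
    unfolding prob_bind_pmf using assms
    by (intro integral_mono_on_support[where Bf=1 and Bg="\<bar>c\<bar>"]) auto
  then show ?thesis by simp
qed

lemma prob_mono_on_support:
  assumes "\<And>\<omega>. \<omega> \<in> set_pmf M \<Longrightarrow> \<omega> \<in> A \<Longrightarrow> \<omega> \<in> C"
  shows "measure_pmf.prob M A \<le> measure_pmf.prob M C"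
  by (rule measure_pmf.finite_measure_mono_AE) (use assms in \<open>auto simp: AE_measure_pmf_iff\<close>)

text \<open>The basic fixed-point argument behind all loop estimates: a bounded quantity that is
  dominated by an \<open>r\<close>-fraction (\<open>r < 1\<close>) of any of its upper bounds is non-positive.\<close>
lemma nonpos_if_contracting:
  fixes h :: "'a \<Rightarrow> real"
  assumes bounded: "\<And>a. h a \<le> B" and r: "r < 1"
    and step: "\<And>S a. (\<And>a'. h a' \<le> S) \<Longrightarrow> h a \<le> r * S"
  shows "h a \<le> 0"
proof -
  define S where "S = (SUP a. h a)"
  have "bdd_above (range h)" by (rule bdd_aboveI[where M=B]) (use bounded in auto)
  then have le: "\<And>a. h a \<le> S" unfolding S_def by (simp add: cSUP_upper)
  have "S \<le> r * S" unfolding S_def by (rule cSUP_least) (use step le S_def in auto)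
  then have "S * (1 - r) \<le> 0" by (simp add: algebra_simps)
  then have "S \<le> 0" using r by (simp add: mult_le_0_iff)
  then show ?thesis using le[of a] by linarith
qed

subsection \<open>Tails of a scaled geometric distribution\<close>

text \<open>\<open>geom_tail M s\<close> is \<open>Pr[M \<cdot> X > s]\<close> for \<open>X\<close> geometric with success probability \<open>1/2\<close>
  counted as the number of trials (\<open>geometric_pmf\<close> counts the failures).\<close>
definition geom_tail :: "real \<Rightarrow> real \<Rightarrow> real" where
  "geom_tail M s = measure_pmf.prob (geometric_pmf (1/2)) {m. M * real (Suc m) > s}"

lemma geom_tail_nonneg: "0 \<le> geom_tail M s"
  by (simp add: geom_tail_def)

lemma geom_tail_le_1: "geom_tail M s \<le> 1"
  by (simp add: geom_tail_def)

lemma geom_tail_antimono: "s \<le> s' \<Longrightarrow> geom_tail M s' \<le> geom_tail M s"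
  unfolding geom_tail_def by (intro measure_pmf.finite_measure_mono) auto

lemma geom_tail_below:
  assumes "0 \<le> M" "s < M"
  shows "geom_tail M s = 1"
proof -
  have "\<And>j. M \<le> M * real (Suc j)" using assms(1) by (simp add: mult_le_cancel_left1)
  then have "{j. M * real (Suc j) > s} = UNIV" using assms(2) by (auto intro: less_le_trans)
  then show ?thesis by (simp add: geom_tail_def)
qed

text \<open>Memorylessness: beyond one step, the tail halves.\<close>
lemma geom_tail_step:
  assumes "M \<le> s"
  shows "geom_tail M s = 1/2 * geom_tail M (s - M)"
proof -
  have unfold: "geometric_pmf (1/2) = bernoulli_pmf (1/2) \<bind>
      (\<lambda>b. if b then return_pmf 0 else map_pmf Suc (geometric_pmf (1/2)))"
    by (rule geometric_bind_pmf_unfold) simp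
  have shift: "{j. s < M * (2 + real j)} = {j. s - M < M * (1 + real j)}"
    by (auto simp: algebra_simps)
  show ?thesis
    unfolding geom_tail_def by (subst unfold) (use assms in \<open>simp add: prob_bind_pmf shift\<close>)
qed

subsection \<open>Restart loops\<close>

text \<open>An abstract restart loop: one round \<open>B\<close> yields an output \<open>x'\<close>, a restart flag \<open>b\<close> and a
  cost \<open>c\<close>; the loop \<open>L t\<close> (with \<open>t\<close> the cost spent so far) repeats rounds until one does not
  restart.\<close>
locale restart_loop =
  fixes B :: "('a \<times> bool \<times> nat) pmf" and L :: "nat \<Rightarrow> ('a \<times> nat) spmf" and M :: real
  assumes L_unfold: "L t = B \<bind> (\<lambda>(x', b, c). if b then L (t + c) else return_spmf (x', t + c))"
    and restart_le_half: "measure_pmf.prob B {(x', b, c). b} \<le> 1/2"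
    and cost_le: "(x', b, c) \<in> set_pmf B \<Longrightarrow> real c \<le> M"
begin

definition Pr :: "nat \<Rightarrow> ('a \<times> nat) set \<Rightarrow> real" where
  "Pr t A = measure (measure_spmf (L t)) A"

definition restart :: real where
  "restart = measure_pmf.prob B {(x', b, c). b}"

definition exit_prob :: "('a \<Rightarrow> bool) \<Rightarrow> real" where
  "exit_prob Q = measure_pmf.prob B {(x', b, c). \<not> b \<and> Q x'}"

text \<open>Contribution of a restarting first round to \<open>Pr t A\<close>.\<close>
definition resume :: "nat \<Rightarrow> ('a \<times> nat) set \<Rightarrow> real" where
  "resume t A = (\<integral>\<omega>. (case \<omega> of (x', b, c) \<Rightarrow> if b then Pr (t + c) A else 0) \<partial>B)"

lemma Pr_nonneg: "0 \<le> Pr t A" and Pr_le_1: "Pr t A \<le> 1"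
  by (simp_all add: Pr_def measure_spmf.subprob_measure_le_1)

lemma restart_lt_1: "restart < 1"
  using restart_le_half by (simp add: restart_def)

lemma M_nonneg: "0 \<le> M"
proof -
  obtain x' b c where "(x', b, c) \<in> set_pmf B" using set_pmf_not_empty[of B] by auto
  then show ?thesis using cost_le by force
qed

lemma Pr_split: "Pr t A = resume t A + measure_pmf.prob B {(x', b, c). \<not> b \<and> (x', t + c) \<in> A}"
proof -
  define E where "E = {(x', b, c). \<not> b \<and> (x', t + c) \<in> A}"
  have "Pr t A = (\<integral>\<omega>. measure_pmf.prob
      ((\<lambda>(x', b, c). if b then L (t + c) else return_spmf (x', t + c)) \<omega>) (Some ` A) \<partial>B)"
    unfolding Pr_def measure_measure_spmf_conv_measure_pmf by (subst L_unfold) (rule prob_bind_pmf)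
  also have "\<dots> = (\<integral>\<omega>. (case \<omega> of (x', b, c) \<Rightarrow> if b then Pr (t + c) A else 0) + indicator E \<omega> \<partial>B)"
  proof (rule Bochner_Integration.integral_cong[OF refl])
    fix \<omega> :: "'a \<times> bool \<times> nat"
    obtain x' b c where \<omega>: "\<omega> = (x', b, c)" by (cases \<omega>)
    show "measure_pmf.prob ((\<lambda>(x', b, c). if b then L (t + c) else return_spmf (x', t + c)) \<omega>) (Some ` A)
        = (case \<omega> of (x', b, c) \<Rightarrow> if b then Pr (t + c) A else 0) + indicator E \<omega>"
      unfolding \<omega> by (cases b) (auto simp: Pr_def measure_measure_spmf_conv_measure_pmf E_def indicator_def)
  qed
  also have "\<dots> = resume t A + measure_pmf.prob B E"
    unfolding resume_def using Pr_nonneg Pr_le_1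
    by (subst Bochner_Integration.integral_add)
      (auto intro!: integrable_pmf_bounded[where B=1] simp: abs_le_iff split: prod.splits)
  finally show ?thesis unfolding E_def .
qed

lemma resume_le:
  assumes "\<And>x' c. (x', True, c) \<in> set_pmf B \<Longrightarrow> Pr (t + c) A \<le> S"
  shows "resume t A \<le> S * restart"
proof -
  have "resume t A \<le> (\<integral>\<omega>. S * indicator {(x', b, c). b} \<omega> \<partial>B)"
    unfolding resume_def using assms Pr_nonneg Pr_le_1
    by (intro integral_mono_on_support[where Bf=1 and Bg="\<bar>S\<bar>"]) (auto simp: indicator_def)
  then show ?thesis by (simp add: restart_def)
qed

lemma resume_ge:
  assumes "\<And>x' c. (x', True, c) \<in> set_pmf B \<Longrightarrow> S \<le> Pr (t + c) A"
  shows "S * restart \<le> resume t A"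
proof -
  have "(\<integral>\<omega>. S * indicator {(x', b, c). b} \<omega> \<partial>B) \<le> resume t A"
    unfolding resume_def using assms Pr_nonneg Pr_le_1
    by (intro integral_mono_on_support[where Bf="\<bar>S\<bar>" and Bg=1]) (auto simp: indicator_def)
  then show ?thesis by (simp add: restart_def)
qed

lemma exit_prob_compl: "exit_prob Q + exit_prob (\<lambda>x'. \<not> Q x') = 1 - restart"
proof -
  have "exit_prob Q + exit_prob (\<lambda>x'. \<not> Q x') = measure_pmf.prob B {(x', b, c). \<not> b}"
    unfolding exit_prob_def
    by (subst measure_pmf.finite_measure_Union[symmetric]) (auto intro: arg_cong[where f="measure _"])
  also have "\<dots> = 1 - restart"
    unfolding restart_def by (subst measure_pmf.prob_compl[symmetric]) (auto intro: arg_cong[where f="measure _"])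
  finally show ?thesis .
qed

text \<open>The output law of the loop is the exit law of one round, conditioned on not restarting;
  in particular the loop terminates almost surely.\<close>
theorem exit_law: "Pr t {(x', T). Q x'} = exit_prob Q / (1 - restart)"
proof -
  define q where "q = exit_prob Q / (1 - restart)"
  define A where "A = {(x' :: 'a, T :: nat). Q x'}"
  have fixpoint: "q = restart * q + exit_prob Q"
    using restart_lt_1 unfolding q_def by (simp add: field_simps)
  have split: "Pr t' A = resume t' A + exit_prob Q" for t'
    unfolding Pr_split exit_prob_def A_def by simp
  have "Pr t A - q \<le> 0"
  proof (rule nonpos_if_contracting[where h="\<lambda>t. Pr t A - q" and r=restart and B="1 - q"])
    fix S t assume "\<And>t'. Pr t' A - q \<le> S"
    then have "resume t A \<le> (q + S) * restart"
      by (intro resume_le) (simp add: algebra_simps)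
    then show "Pr t A - q \<le> restart * S" using split fixpoint by (simp add: algebra_simps)
  qed (use Pr_le_1 restart_lt_1 in \<open>auto simp: algebra_simps\<close>)
  moreover have "q - Pr t A \<le> 0"
  proof (rule nonpos_if_contracting[where h="\<lambda>t. q - Pr t A" and r=restart and B=q])
    fix S t assume "\<And>t'. q - Pr t' A \<le> S"
    then have "(q - S) * restart \<le> resume t A"
      by (intro resume_ge) (simp add: algebra_simps)
    then show "q - Pr t A \<le> restart * S" using split fixpoint by (simp add: algebra_simps)
  qed (use Pr_nonneg restart_lt_1 in \<open>auto simp: algebra_simps\<close>)
  ultimately show ?thesis unfolding q_def A_def by linarith
qed

corollary lossless: "Pr t UNIV = 1"
proof -
  have "exit_prob (\<lambda>_. False) = 0" by (auto simp: exit_prob_def measure_pmf_zero_iff)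
  then have "exit_prob (\<lambda>_. True) = 1 - restart" using exit_prob_compl[of "\<lambda>_. True"] by simp
  then show ?thesis using exit_law[of t "\<lambda>_. True"] restart_lt_1 by simp
qed

corollary exit_law_lower: "1 - 2 * exit_prob (\<lambda>x'. \<not> Q x') \<le> Pr t {(x', T). Q x'}"
proof -
  define e where "e = exit_prob (\<lambda>x'. \<not> Q x')"
  have "1/2 \<le> 1 - restart" using restart_le_half by (simp add: restart_def)
  moreover have "0 \<le> e" by (simp add: e_def exit_prob_def)
  ultimately have "e / (1 - restart) \<le> e / (1/2)" by (intro divide_left_mono) auto
  moreover have "Pr t {(x', T). Q x'} = 1 - e / (1 - restart)"
    using exit_law[of t Q] exit_prob_compl[of Q] restart_lt_1 by (simp add: e_def field_simps)
  ultimately show ?thesis unfolding e_def[symmetric] by simp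
qed

text \<open>This is the
  conditional form of the stochastic domination.\<close>
theorem tail_bound:
  "Pr t {(x', T). s < real T \<and> Q x'} \<le> geom_tail M (s - real t) * Pr t {(x', T). Q x'}"
proof -
  define q where "q = exit_prob Q / (1 - restart)"
  define A where "A = {(x' :: 'a, T :: nat). s < real T \<and> Q x'}"
  have q_Pr: "Pr t' {(x', T). Q x'} = q" for t' by (simp add: exit_law q_def)
  have q_nonneg: "0 \<le> q" using Pr_nonneg q_Pr by metis
  have fixpoint: "q = restart * q + exit_prob Q"
    using restart_lt_1 unfolding q_def by (simp add: field_simps)
  have "Pr t A - geom_tail M (s - real t) * q \<le> 0"
  proof (rule nonpos_if_contracting[where h="\<lambda>t. Pr t A - geom_tail M (s - real t) * q" and r=restart and B=1])
    fix S t assume IH: "\<And>t'. Pr t' A - geom_tail M (s - real t') * q \<le> S"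
    have split: "Pr t A = resume t A + measure_pmf.prob B {(x', b, c). \<not> b \<and> s < real (t + c) \<and> Q x'}"
      unfolding Pr_split A_def by simp
    show "Pr t A - geom_tail M (s - real t) * q \<le> restart * S"
    proof (cases "s - real t < M")
      case True
      have "resume t A \<le> (q + S) * restart"
      proof (rule resume_le)
        fix x' c
        have "geom_tail M (s - real (t + c)) * q \<le> q"
          using q_nonneg geom_tail_le_1 by (simp add: mult_left_le_one_le geom_tail_nonneg)
        then show "Pr (t + c) A \<le> q + S" using IH[of "t + c"] by linarith
      qed
      moreover have "measure_pmf.prob B {(x', b, c). \<not> b \<and> s < real (t + c) \<and> Q x'} \<le> exit_prob Q"
        unfolding exit_prob_def by (rule measure_pmf.finite_measure_mono) auto
      ultimately show ?thesis
        using split fixpoint geom_tail_below[OF M_nonneg True] by (simp add: algebra_simps)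
    next
      case False
      define G where "G = geom_tail M (s - real t - M)"
      have "resume t A \<le> (G * q + S) * restart"
      proof (rule resume_le)
        fix x' c assume "(x', True, c) \<in> set_pmf B"
        then have "real c \<le> M" by (rule cost_le)
        then have "geom_tail M (s - real (t + c)) \<le> G"
          unfolding G_def by (intro geom_tail_antimono) simp
        then show "Pr (t + c) A \<le> G * q + S"
          using IH[of "t + c"] mult_right_mono[OF _ q_nonneg] by fastforce
      qed
      moreover have "measure_pmf.prob B {(x', b, c). \<not> b \<and> s < real (t + c) \<and> Q x'} = 0"
        using False cost_le by (force simp: measure_pmf_zero_iff)
      ultimately have "Pr t A \<le> (G * q + S) * restart" using split by simp
      also have "\<dots> \<le> G * q * (1/2) + restart * S"
      proof -
        have "G * q * restart \<le> G * q * (1/2)"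
          using restart_le_half q_nonneg geom_tail_nonneg[of M "s - real t - M"]
          by (intro mult_left_mono) (auto simp: G_def restart_def)
        then show ?thesis by (simp add: algebra_simps)
      qed
      also have "\<dots> = geom_tail M (s - real t) * q + restart * S"
        using geom_tail_step[of M "s - real t"] False by (simp add: G_def)
      finally show ?thesis by simp
    qed
  qed (use Pr_le_1 restart_lt_1 q_nonneg geom_tail_nonneg in \<open>auto intro: add_increasing2 simp: diff_le_eq\<close>)
  then show ?thesis using q_Pr[of t] by (simp add: A_def)
qed

corollary cost_tail: "1 - Pr t {(x', T). real T \<le> s} \<le> geom_tail M (s - real t)"
proof -
  have "Pr t {(x', T). real T \<le> s} + Pr t {(x', T). s < real T} = Pr t UNIV"
  proof -
    have compl: "- {(x', T). real T \<le> s} = {(x', T). s < real T}" by auto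
    show ?thesis
      using measure_spmf.finite_measure_compl[of "{(x', T). real T \<le> s}" "L t"]
      unfolding Pr_def space_measure_spmf Compl_eq_Diff_UNIV[symmetric] compl by simp
  qed
  moreover have "Pr t {(x', T). s < real T} \<le> geom_tail M (s - real t)"
    using tail_bound[of t s "\<lambda>_. True"] lossless[of t] by simp
  ultimately show ?thesis using lossless[of t] by linarith
qed

end

subsection \<open>Uniformly random subsets\<close>

lemma card_subsets_containing:
  assumes E: "finite E" "i \<in> E"
  shows "card {S. S \<subseteq> E \<and> card S = Suc m \<and> i \<in> S} = (card E - 1) choose m"
proof -
  define E' where "E' = E - {i}"
  have fin: "finite E'" using E by (simp add: E'_def)
  have "{S. S \<subseteq> E \<and> card S = Suc m \<and> i \<in> S} = insert i ` {T. T \<subseteq> E' \<and> card T = m}"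
  proof (intro equalityI subsetI)
    fix S assume "S \<in> {S. S \<subseteq> E \<and> card S = Suc m \<and> i \<in> S}"
    then have S: "S \<subseteq> E" "card S = Suc m" "i \<in> S" by auto
    then have "S - {i} \<subseteq> E'" "card (S - {i}) = m" "S = insert i (S - {i})"
      using finite_subset[OF S(1) E(1)] by (auto simp: E'_def)
    then show "S \<in> insert i ` {T. T \<subseteq> E' \<and> card T = m}" by blast
  next
    fix S assume "S \<in> insert i ` {T. T \<subseteq> E' \<and> card T = m}"
    then obtain T where T: "T \<subseteq> E'" "card T = m" "S = insert i T" by blast
    then have "finite T" "i \<notin> T" using finite_subset[OF T(1) fin] by (auto simp: E'_def)
    then show "S \<in> {S. S \<subseteq> E \<and> card S = Suc m \<and> i \<in> S}" using T E by (auto simp: E'_def)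
  qed
  moreover have "inj_on (insert i) {T. T \<subseteq> E' \<and> card T = m}"
    unfolding inj_on_def E'_def by blast
  ultimately show ?thesis
    using n_subsets[OF fin] E by (simp add: card_image E'_def)
qed

lemma prob_random_subset_contains:
  assumes E: "finite E" "i \<in> E" and m: "m \<le> card E"
  shows "measure_pmf.prob (pmf_of_set {S. S \<subseteq> E \<and> card S = m}) {S. i \<in> S} = m / card E"
proof -
  define Ss where "Ss = {S. S \<subseteq> E \<and> card S = m}"
  have fin: "finite Ss" unfolding Ss_def by (rule finite_subset[of _ "Pow E"]) (auto simp: E)
  have card_Ss: "card Ss = card E choose m" unfolding Ss_def by (rule n_subsets[OF E(1)])
  have pos: "0 < card E choose m" using m by simp
  have count: "card (Ss \<inter> {S. i \<in> S}) * card E = m * card Ss"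
  proof (cases m)
    case 0
    have "Ss \<inter> {S. i \<in> S} = {}"
    proof (intro equalityI subsetI)
      fix S assume "S \<in> Ss \<inter> {S. i \<in> S}"
      then have "S \<subseteq> E" "card S = 0" "i \<in> S" using 0 by (auto simp: Ss_def)
      then show "S \<in> {}" using finite_subset[OF _ E(1)] by auto
    qed simp
    then show ?thesis using 0 by simp
  next
    case (Suc m')
    define N where "N = card E - 1"
    have N: "card E = Suc N" using E card_gt_0_iff[of E] unfolding N_def by auto
    have "Ss \<inter> {S. i \<in> S} = {S. S \<subseteq> E \<and> card S = Suc m' \<and> i \<in> S}"
      unfolding Ss_def Suc by blast
    then have "card (Ss \<inter> {S. i \<in> S}) = N choose m'"
      using card_subsets_containing[OF E, of m'] N by simp
    then show ?thesis
      using Suc_times_binomial[of m' N] card_Ss N Suc by (simp add: mult.commute)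
  qed
  have ne: "Ss \<noteq> {}" using pos card_Ss by auto
  have "real (card (Ss \<inter> {S. i \<in> S})) * real (card E) = real m * real (card Ss)"
    using count by (metis of_nat_mult)
  moreover have "0 < card E" using E by (auto simp: card_gt_0_iff)
  moreover have "0 < card Ss" using pos card_Ss by simp
  ultimately show ?thesis
    unfolding Ss_def[symmetric] measure_pmf_of_set[OF ne fin] by (simp add: field_simps)
qed

lemma tests_cost_le: "(b, c) \<in> set_pmf (tests n k x' y j) \<Longrightarrow> c \<le> j"
  by (induction j arbitrary: b c) (auto split: if_splits)

lemma tests_never_hit:
  assumes "\<And>u. u \<in> set_pmf (flip_differ (k - 1) x' y) \<Longrightarrow> jumpf n u \<noteq> n div 2"
  shows "(b, c) \<in> set_pmf (tests n k x' y j) \<Longrightarrow> \<not> b"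
  using assms by (induction j arbitrary: b c) (auto split: if_splits)

text \<open>The tests are independent: all \<open>j\<close> of them miss with probability \<open>p ^ j\<close>.\<close>
lemma tests_miss_prob:
  "measure_pmf.prob (tests n k x' y j) {(b, c). \<not> b}
     = measure_pmf.prob (flip_differ (k - 1) x' y) {u. jumpf n u \<noteq> n div 2} ^ j"
proof (induction j)
  case (Suc j)
  define U where "U = flip_differ (k - 1) x' y"
  define p where "p = measure_pmf.prob (tests n k x' y j) {(b, c). \<not> b}"
  have "(\<lambda>(b, c). (b, Suc c)) -` {(b, c). \<not> b} = {(b :: bool, c). \<not> b}" by auto
  then have shift: "measure_pmf.prob (map_pmf (\<lambda>(b, c). (b, Suc c)) (tests n k x' y j)) {(b, c). \<not> b} = p"
    by (simp add: p_def)
  have "measure_pmf.prob (tests n k x' y (Suc j)) {(b, c). \<not> b}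
      = (\<integral>u. p * indicator {u. jumpf n u \<noteq> n div 2} u \<partial>U)"
    unfolding tests.simps prob_bind_pmf U_def[symmetric]
    by (rule Bochner_Integration.integral_cong) (auto simp del: measure_map_pmf simp: shift indicator_def)
  also have "\<dots> = p * measure_pmf.prob U {u. jumpf n u \<noteq> n div 2}" by simp
  finally show ?case using Suc.IH by (simp add: p_def U_def mult.commute)
qed simp

lemma num_tests_le: "1 \<le> n \<Longrightarrow> real (num_tests n) \<le> 1 + 2 * log 2 (real n)"
  unfolding num_tests_def by (simp add: of_nat_nat)

lemma half_pow_num_tests:
  assumes "1 \<le> n"
  shows "(1/2 :: real) ^ num_tests n \<le> 1 / (real n)^2"
proof -
  have "2 * log 2 (real n) \<le> real (num_tests n)"
    using assms unfolding num_tests_def by (simp add: of_nat_nat) linarith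
  have "2 powr (2 * log 2 (real n)) = 2 powr (log 2 (real n)) * 2 powr (log 2 (real n))"
    by (simp add: powr_add[symmetric])
  then have "(real n)^2 = 2 powr (2 * log 2 (real n))"
    using assms by (simp add: power2_eq_square)
  also have "\<dots> \<le> 2 powr real (num_tests n)"
    using \<open>2 * log 2 (real n) \<le> real (num_tests n)\<close> by (intro powr_mono) auto
  also have "\<dots> = 2 ^ num_tests n" by (simp add: powr_realpow)
  finally show ?thesis using assms by (simp add: power_one_over divide_simps)
qed

definition round_pmf :: "nat \<Rightarrow> nat \<Rightarrow> bool list \<Rightarrow> bool list \<Rightarrow> (bool list \<times> bool \<times> nat) pmf" where
  "round_pmf n k x y =
     flip_agree x y \<bind> (\<lambda>x'. map_pmf (\<lambda>(b, c). (x', b, c)) (tests n k x' y (num_tests n)))"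

lemma mf_loop_unfold:
  "mf_loop n k x y t = round_pmf n k x y \<bind>
     (\<lambda>(x', b, c). if b then mf_loop n k x y (t + c) else return_spmf (x', t + c))"
  by (subst mf_loop.simps)
    (simp add: round_pmf_def bind_assoc_pmf map_pmf_def bind_return_pmf)

lemma set_round_pmf:
  "(x', b, c) \<in> set_pmf (round_pmf n k x y)
     \<longleftrightarrow> x' \<in> set_pmf (flip_agree x y) \<and> (b, c) \<in> set_pmf (tests n k x' y (num_tests n))"
  by (auto simp: round_pmf_def)

lemma candidate_round_pmf: "map_pmf fst (round_pmf n k x y) = flip_agree x y"
  by (simp add: round_pmf_def map_bind_pmf pmf.map_comp o_def case_prod_beta bind_return_pmf')

lemma flip_differ_uniform:
  assumes "m \<le> card {i. i < length x \<and> x ! i \<noteq> y ! i}"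
  shows "flip_differ m x y
     = map_pmf (\<lambda>S. flip S x) (pmf_of_set {S. S \<subseteq> {i. i < length x \<and> x ! i \<noteq> y ! i} \<and> card S = m})"
proof -
  obtain T where "T \<subseteq> {i. i < length x \<and> x ! i \<noteq> y ! i}" "card T = m"
    using obtain_subset_with_card_n[OF assms] by blast
  then show ?thesis unfolding flip_differ_def Let_def by auto
qed

subsection \<open>Opposing pairs\<close>

lemma card_positions_cong:
  "(\<And>i. i < (n::nat) \<Longrightarrow> P i = Q i) \<Longrightarrow> card {i. i < n \<and> P i} = card {i. i < n \<and> Q i}"
  by (rule arg_cong[where f=card]) auto

lemma ones_by_agreement:
  assumes "length x = n" "length y = n"
  shows "ones x = card {i. i < n \<and> x ! i \<noteq> y ! i \<and> x ! i} + card {i. i < n \<and> x ! i = y ! i \<and> x ! i}"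
    and "ones y = card {i. i < n \<and> x ! i \<noteq> y ! i \<and> \<not> x ! i} + card {i. i < n \<and> x ! i = y ! i \<and> x ! i}"
proof -
  have "ones x = card {i. i < n \<and> x ! i \<and> x ! i \<noteq> y ! i} + card {i. i < n \<and> x ! i \<and> \<not> x ! i \<noteq> y ! i}"
    unfolding ones_card assms by (rule card_split)
  also have "\<dots> = card {i. i < n \<and> x ! i \<noteq> y ! i \<and> x ! i} + card {i. i < n \<and> x ! i = y ! i \<and> x ! i}"
    by (intro arg_cong2[where f="(+)"] card_positions_cong) auto
  finally show "ones x = card {i. i < n \<and> x ! i \<noteq> y ! i \<and> x ! i} + card {i. i < n \<and> x ! i = y ! i \<and> x ! i}" .
  have "ones y = card {i. i < n \<and> y ! i \<and> x ! i \<noteq> y ! i} + card {i. i < n \<and> y ! i \<and> \<not> x ! i \<noteq> y ! i}"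
    unfolding ones_card assms by (rule card_split)
  also have "\<dots> = card {i. i < n \<and> x ! i \<noteq> y ! i \<and> \<not> x ! i} + card {i. i < n \<and> x ! i = y ! i \<and> x ! i}"
    by (intro arg_cong2[where f="(+)"] card_positions_cong) auto
  finally show "ones y = card {i. i < n \<and> x ! i \<noteq> y ! i \<and> \<not> x ! i} + card {i. i < n \<and> x ! i = y ! i \<and> x ! i}" .
qed

text \<open>We write
  \<open>h = n/2\<close> and \<open>v\<close> for the bit that \<open>x\<close> has in excess (\<open>v\<close> holds iff \<open>x\<close> lies above the
  middle level); \<open>sg\<close> is the corresponding sign.\<close>
locale opposing_setting =
  fixes n k :: nat and x y :: "bool list"
  assumes even_n: "even n" and n_ge_4: "4 \<le> n" and k_pos: "1 \<le> k" and k_le: "k \<le> n div 2 - 1"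
    and opposing: "opposing_pair n k x y"
begin

definition h :: nat where "h = n div 2"
definition v :: bool where "v = (h < ones x)"
definition sg :: int where "sg = (if v then 1 else -1)"
definition Dset :: "nat set" where "Dset = {i. i < n \<and> x ! i \<noteq> y ! i}"
definition Aset :: "nat set" where "Aset = {i. i < n \<and> x ! i = y ! i}"

definition good :: "bool list \<Rightarrow> bool" where
  "good x' \<longleftrightarrow> dd n x' = k + 1 \<and> hamming x x' = 1 \<and> hamming x' y = 2 * k + 1"

lemma length_x: "length x = n" and length_y: "length y = n"
  using opposing by (auto simp: opposing_pair_def)

lemma n_eq: "n = 2 * h" and k_less_h: "k + 1 \<le> h"
  using even_n k_le k_pos n_ge_4 by (auto simp: h_def)

lemma ones_x_y: "int (ones x) = int h + sg * int k" "int (ones y) = int h - sg * int k"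
proof -
  have dx: "\<bar>int (ones x) - int h\<bar> = int k" and dy: "\<bar>int (ones y) - int h\<bar> = int k"
    using opposing by (auto simp: opposing_pair_def dd_def h_def nat_eq_iff)
  have "sgn (int (ones x) - int h) * sgn (int (ones y) - int h) = -1"
    using opposing by (simp add: opposing_pair_def sgnh_def h_def)
  then have "(int h < int (ones x) \<and> int (ones y) < int h) \<or> (int (ones x) < int h \<and> int h < int (ones y))"
    by (auto simp: sgn_if split: if_splits)
  then show "int (ones x) = int h + sg * int k" "int (ones y) = int h - sg * int k"
    using dx dy by (auto simp: sg_def v_def abs_if split: if_splits)
qed

lemma dd_of_ones: "int (ones z) = int h + sg * int j \<Longrightarrow> dd n z = j"
  by (simp add: dd_def h_def[symmetric] sg_def)

lemma position_structure:
  "\<And>i. i \<in> Dset \<Longrightarrow> x ! i = v"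
  "card {i \<in> Aset. x ! i = v} = h - k"
  "card {i \<in> Aset. x ! i \<noteq> v} = h - k"
proof -
  define d1 where "d1 = card {i. i < n \<and> x ! i \<noteq> y ! i \<and> x ! i}"
  define d0 where "d0 = card {i. i < n \<and> x ! i \<noteq> y ! i \<and> \<not> x ! i}"
  define a1 where "a1 = card {i. i < n \<and> x ! i = y ! i \<and> x ! i}"
  define a0 where "a0 = card {i. i < n \<and> x ! i = y ! i \<and> \<not> x ! i}"
  have ones: "ones x = d1 + a1" "ones y = d0 + a1"
    unfolding d1_def d0_def a1_def by (rule ones_by_agreement[OF length_x length_y])+
  have "2 * k = card {i. i < n \<and> x ! i \<noteq> y ! i}"
    using opposing length_x by (simp add: opposing_pair_def hamming_def)
  moreover have "card {i. i < n \<and> x ! i \<noteq> y ! i} = d1 + d0"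
    unfolding d1_def d0_def by (rule card_split)
  ultimately have differ: "d1 + d0 = 2 * k" by simp
  have "n = card {i. i < n \<and> True \<and> x ! i \<noteq> y ! i} + card {i. i < n \<and> True \<and> \<not> x ! i \<noteq> y ! i}"
    using card_split[of n "\<lambda>_. True" "\<lambda>i. x ! i \<noteq> y ! i"] by simp
  moreover have "card {i. i < n \<and> True \<and> x ! i \<noteq> y ! i} = d1 + d0"
    unfolding d1_def d0_def by (subst card_split[of n _ "\<lambda>i. x ! i"]) simp
  moreover have "card {i. i < n \<and> True \<and> \<not> x ! i \<noteq> y ! i} = a1 + a0"
    unfolding a1_def a0_def by (subst card_split[of n _ "\<lambda>i. x ! i"]) simp
  ultimately have total: "n = d1 + d0 + a1 + a0" by simp
  have counts: "(if v then d0 else d1) = 0 \<and> a1 = h - k \<and> a0 = h - k"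
  proof (cases v)
    case True
    then have "int (ones x) = int h + int k" "int (ones y) = int h - int k"
      using ones_x_y by (simp_all add: sg_def)
    then show ?thesis unfolding if_P[OF True] using ones differ total n_eq k_less_h by linarith
  next
    case False
    then have "int (ones x) = int h - int k" "int (ones y) = int h + int k"
      using ones_x_y by (simp_all add: sg_def)
    then show ?thesis unfolding if_not_P[OF False] using ones differ total n_eq k_less_h by linarith
  qed
  show "\<And>i. i \<in> Dset \<Longrightarrow> x ! i = v"
  proof -
    fix i assume i: "i \<in> Dset"
    have "finite {i. i < n \<and> x ! i \<noteq> y ! i \<and> x ! i \<noteq> v}" by simp
    moreover have "card {i. i < n \<and> x ! i \<noteq> y ! i \<and> x ! i \<noteq> v} = 0"
      using counts unfolding d0_def d1_def by (cases v) auto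
    ultimately show "x ! i = v" using i unfolding Dset_def by auto
  qed
  have "{i \<in> Aset. x ! i = v} = {i. i < n \<and> x ! i = y ! i \<and> x ! i = v}"
    "{i \<in> Aset. x ! i \<noteq> v} = {i. i < n \<and> x ! i = y ! i \<and> x ! i \<noteq> v}"
    unfolding Aset_def by auto
  then show "card {i \<in> Aset. x ! i = v} = h - k" "card {i \<in> Aset. x ! i \<noteq> v} = h - k"
    using counts unfolding a1_def a0_def by (cases v; simp)+
qed

lemma finite_Aset: "finite Aset" and finite_Dset: "finite Dset"
  by (simp_all add: Aset_def Dset_def)

lemma card_Dset: "card Dset = 2 * k"
  using opposing length_x by (simp add: opposing_pair_def hamming_def Dset_def)

lemma card_Aset: "card Aset = 2 * (h - k)"
proof -
  have "card Aset = card {i. i < n \<and> x ! i = y ! i \<and> x ! i = v} + card {i. i < n \<and> x ! i = y ! i \<and> \<not> x ! i = v}"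
    unfolding Aset_def by (rule card_split)
  moreover have "{i. i < n \<and> x ! i = y ! i \<and> x ! i = v} = {i \<in> Aset. x ! i = v}"
    "{i. i < n \<and> x ! i = y ! i \<and> \<not> x ! i = v} = {i \<in> Aset. x ! i \<noteq> v}"
    by (auto simp: Aset_def)
  ultimately show ?thesis using position_structure(2,3) by simp
qed

lemma Aset_nonempty: "Aset \<noteq> {}"
  using card_Aset k_less_h by auto

lemma flip_agree_x: "flip_agree x y = map_pmf (\<lambda>i. flip {i} x) (pmf_of_set Aset)"
proof -
  have A: "{i. i < length x \<and> x ! i = y ! i} = Aset" using length_x by (simp add: Aset_def)
  show ?thesis unfolding flip_agree_def Let_def A using Aset_nonempty by simp
qed

text \<open>Flipping an agreeing position \<open>i\<close> moves \<open>x\<close> one level towards the middle if \<open>x ! i = v\<close>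
  (an inward flip) and one level away from it otherwise (an outward flip); afterwards the
  string differs from \<open>y\<close> exactly on \<open>insert i Dset\<close>.\<close>
lemma ones_flip_agreeing:
  assumes "i \<in> Aset"
  shows "int (ones (flip {i} x)) = int h + sg * (if x ! i = v then int k - 1 else int k + 1)"
  using ones_flip_uniform[of "{i}" x "x ! i"] ones_x_y(1) assms length_x
  by (cases v) (auto simp: Aset_def sg_def)

lemma differ_after_flip:
  assumes "i \<in> Aset"
  shows "{j. j < length (flip {i} x) \<and> flip {i} x ! j \<noteq> y ! j} = insert i Dset"
  using assms length_x unfolding Aset_def Dset_def by auto

lemma card_differ_after_flip: "i \<in> Aset \<Longrightarrow> card (insert i Dset) = 2 * k + 1"
proof -
  assume "i \<in> Aset"
  then have "i \<notin> Dset" by (simp add: Aset_def Dset_def)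
  then show ?thesis using finite_Dset card_Dset by simp
qed

lemma flip_bits_on_Dset:
  assumes "i \<in> Aset" "j \<in> Dset"
  shows "flip {i} x ! j = v"
proof -
  have "j < length x" "j \<noteq> i" using assms length_x by (auto simp: Aset_def Dset_def)
  then show ?thesis using position_structure(1)[OF assms(2)] by simp
qed

lemma jumpf_plateau: "jumpf n u = n div 2 \<longleftrightarrow> ones u = h"
  using n_ge_4 by (auto simp: jumpf_def h_def)

lemma test_phase:
  assumes "i \<in> Aset"
  shows "flip_differ (k - 1) (flip {i} x) y
     = map_pmf (\<lambda>S. flip S (flip {i} x)) (pmf_of_set {S. S \<subseteq> insert i Dset \<and> card S = k - 1})"
  using flip_differ_uniform[of "k - 1" "flip {i} x" y] differ_after_flip[OF assms]
    card_differ_after_flip[OF assms] by simp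

lemma test_subsets:
  assumes "i \<in> Aset"
  shows "finite {S. S \<subseteq> insert i Dset \<and> card S = k - 1}" "{S. S \<subseteq> insert i Dset \<and> card S = k - 1} \<noteq> {}"
proof -
  show "finite {S. S \<subseteq> insert i Dset \<and> card S = k - 1}"
    by (rule finite_subset[of _ "Pow (insert i Dset)"]) (auto simp: finite_Dset)
  have "k - 1 \<le> card (insert i Dset)" using card_differ_after_flip[OF assms] by simp
  then obtain T where "T \<subseteq> insert i Dset" "card T = k - 1" by (rule obtain_subset_with_card_n)
  then show "{S. S \<subseteq> insert i Dset \<and> card S = k - 1} \<noteq> {}" by auto
qed

lemma set_test_phase:
  assumes "i \<in> Aset"
  shows "u \<in> set_pmf (flip_differ (k - 1) (flip {i} x) y)
     \<longleftrightarrow> (\<exists>S. S \<subseteq> insert i Dset \<and> card S = k - 1 \<and> u = flip S (flip {i} x))"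
  unfolding test_phase[OF assms] using set_pmf_of_set[OF test_subsets(2,1)[OF assms]] by auto

lemma outward_good:
  assumes "i \<in> Aset" "x ! i \<noteq> v"
  shows "good (flip {i} x)"
proof -
  have "dd n (flip {i} x) = k + 1"
    using ones_flip_agreeing[OF assms(1)] assms(2) by (intro dd_of_ones) simp
  moreover have "{j. j < length x \<and> x ! j \<noteq> flip {i} x ! j} = {i}"
    using assms length_x by (auto simp: Aset_def)
  moreover have "hamming (flip {i} x) y = 2 * k + 1"
    unfolding hamming_def differ_after_flip[OF assms(1)] by (rule card_differ_after_flip[OF assms(1)])
  ultimately show ?thesis by (simp add: good_def hamming_def)
qed

lemma inward_not_good:
  assumes "i \<in> Aset" "x ! i = v"
  shows "\<not> good (flip {i} x)"
proof -
  have "dd n (flip {i} x) = k - 1"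
    using ones_flip_agreeing[OF assms(1)] assms(2) k_pos by (intro dd_of_ones) (simp add: of_nat_diff)
  then have "dd n (flip {i} x) \<noteq> k + 1" by linarith
  then show ?thesis by (simp add: good_def)
qed

text \<open>After an outward flip all \<open>2k + 1\<close> differing positions carry the bit \<open>v\<close>, so a test
  moves the candidate only \<open>k - 1\<close> levels back: it never reaches the plateau.\<close>
lemma outward_never_hit:
  assumes i: "i \<in> Aset" "x ! i \<noteq> v" and u: "u \<in> set_pmf (flip_differ (k - 1) (flip {i} x) y)"
  shows "jumpf n u \<noteq> n div 2"
proof -
  obtain S where S: "S \<subseteq> insert i Dset" "card S = k - 1" "u = flip S (flip {i} x)"
    using u unfolding set_test_phase[OF i(1)] by blast
  have bits: "\<forall>j\<in>S. flip {i} x ! j = v"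
    using S(1) i flip_bits_on_Dset length_x by (auto simp: Aset_def)
  have "S \<subseteq> {..<length (flip {i} x)}" using S(1) i length_x by (auto simp: Aset_def Dset_def)
  then have "int (ones u) = int (ones (flip {i} x)) + (if v then - int (card S) else int (card S))"
    unfolding S(3) using bits by (rule ones_flip_uniform)
  then have "ones u \<noteq> h"
    using ones_flip_agreeing[OF i(1)] i(2) S(2) k_pos by (auto simp: sg_def split: if_splits)
  then show ?thesis using jumpf_plateau by simp
qed

text \<open>After an inward flip, a test hits the plateau as soon as it avoids position \<open>i\<close>,
  which happens with probability \<open>1 - (k - 1)/(2k + 1) \<ge> 1/2\<close>.\<close>
lemma inward_miss_prob:
  assumes i: "i \<in> Aset" "x ! i = v"
  shows "measure_pmf.prob (flip_differ (k - 1) (flip {i} x) y) {u. jumpf n u \<noteq> n div 2} \<le> 1/2"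
proof -
  define Ss where "Ss = {S. S \<subseteq> insert i Dset \<and> card S = k - 1}"
  have miss: "i \<in> S" if S: "S \<in> Ss" "jumpf n (flip S (flip {i} x)) \<noteq> n div 2" for S
  proof (rule ccontr)
    assume "i \<notin> S"
    then have SD: "S \<subseteq> Dset" and cS: "card S = k - 1" using S(1) by (auto simp: Ss_def)
    have "S \<subseteq> {..<length (flip {i} x)}" using SD length_x by (auto simp: Dset_def)
    then have "int (ones (flip S (flip {i} x))) = int (ones (flip {i} x)) + (if v then - int (card S) else int (card S))"
      by (rule ones_flip_uniform) (use SD flip_bits_on_Dset[OF i(1)] in blast)
    then have "ones (flip S (flip {i} x)) = h"
      using ones_flip_agreeing[OF i(1)] i(2) cS k_pos by (auto simp: sg_def split: if_splits)
    then show False using S(2) jumpf_plateau by simp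
  qed
  have "measure_pmf.prob (flip_differ (k - 1) (flip {i} x) y) {u. jumpf n u \<noteq> n div 2}
      \<le> measure_pmf.prob (pmf_of_set Ss) {S. i \<in> S}"
    unfolding test_phase[OF i(1)] Ss_def[symmetric] measure_map_pmf
    by (rule prob_mono_on_support)
      (use miss set_pmf_of_set[OF test_subsets(2,1)[OF i(1)]] in \<open>auto simp: Ss_def\<close>)
  also have "\<dots> = real (k - 1) / real (2 * k + 1)"
    unfolding Ss_def using finite_Dset card_differ_after_flip[OF i(1)]
    by (subst prob_random_subset_contains) auto
  also have "\<dots> \<le> 1/2" by (simp add: field_simps)
  finally show ?thesis .
qed

lemma candidate_cases:
  assumes "x' \<in> set_pmf (flip_agree x y)"
  obtains i where "i \<in> Aset" "x' = flip {i} x"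
  using assms set_pmf_of_set[OF Aset_nonempty finite_Aset] unfolding flip_agree_x by auto

text \<open>A good candidate can only come from an outward flip and then passes all tests.\<close>
lemma good_never_restarts:
  assumes "(x', b, c) \<in> set_pmf (round_pmf n k x y)" "good x'"
  shows "\<not> b"
proof -
  have x': "x' \<in> set_pmf (flip_agree x y)" and bc: "(b, c) \<in> set_pmf (tests n k x' y (num_tests n))"
    using assms(1) by (auto simp: set_round_pmf)
  obtain i where i: "i \<in> Aset" "x' = flip {i} x" using x' by (rule candidate_cases)
  then have "x ! i \<noteq> v" using inward_not_good assms(2) by blast
  then show ?thesis using tests_never_hit[OF outward_never_hit[OF i(1)]] bc i(2) by blast
qed

text \<open>Half of the agreeing positions give outward flips, so a round restarts with probability at
  most \<open>1/2\<close>.\<close>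
lemma round_restart_le_half: "measure_pmf.prob (round_pmf n k x y) {(x', b, c). b} \<le> 1/2"
proof -
  have "measure_pmf.prob (round_pmf n k x y) {(x', b, c). b}
      \<le> measure_pmf.prob (round_pmf n k x y) {(x', b, c). \<not> good x'}"
    by (rule prob_mono_on_support) (auto dest: good_never_restarts)
  also have "\<dots> = measure_pmf.prob (flip_agree x y) {x'. \<not> good x'}"
    unfolding candidate_round_pmf[of n k x y, symmetric] measure_map_pmf
    by (rule arg_cong[where f="measure_pmf.prob (round_pmf n k x y)"]) auto
  also have "\<dots> \<le> measure_pmf.prob (pmf_of_set Aset) {i. x ! i = v}"
    unfolding flip_agree_x measure_map_pmf
    by (rule prob_mono_on_support)
      (use outward_good set_pmf_of_set[OF Aset_nonempty finite_Aset] in auto)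
  also have "\<dots> = 1/2"
  proof -
    have "Aset \<inter> {i. x ! i = v} = {i \<in> Aset. x ! i = v}" by auto
    moreover have "Aset \<noteq> {}" using card_Aset k_less_h by auto
    ultimately show ?thesis
      using position_structure(2) card_Aset k_less_h finite_Aset by (simp add: measure_pmf_of_set)
  qed
  finally show ?thesis .
qed

text \<open>A round ends without restart on a bad candidate only if all tests after an inward flip
  miss.\<close>
lemma round_bad_exit: "measure_pmf.prob (round_pmf n k x y) {(x', b, c). \<not> b \<and> \<not> good x'} \<le> (1/2) ^ num_tests n"
  unfolding round_pmf_def
proof (rule prob_bind_pmf_le)
  fix x' assume "x' \<in> set_pmf (flip_agree x y)"
  then obtain i where i: "i \<in> Aset" "x' = flip {i} x" by (rule candidate_cases)
  show "measure_pmf.prob (map_pmf (\<lambda>(b, c). (x', b, c)) (tests n k x' y (num_tests n)))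
      {(x', b, c). \<not> b \<and> \<not> good x'} \<le> (1/2) ^ num_tests n"
  proof (cases "good x'")
    case True
    then have empty: "(\<lambda>(b, c). (x', b, c)) -` {(x', b, c). \<not> b \<and> \<not> good x'} = {}" by auto
    show ?thesis by (simp only: measure_map_pmf empty measure_empty) simp
  next
    case False
    then have pre: "(\<lambda>(b, c). (x', b, c)) -` {(x', b, c). \<not> b \<and> \<not> good x'} = {(b, c). \<not> b}" by auto
    have "x ! i = v" using outward_good i False by blast
    then show ?thesis
      unfolding measure_map_pmf pre unfolding tests_miss_prob i(2) by (intro power_mono inward_miss_prob[OF i(1)]) auto
  qed
qed

sublocale restart_loop "round_pmf n k x y" "mf_loop n k x y" "1 + 2 * log 2 (real n)"
proof
  show "mf_loop n k x y t = round_pmf n k x y \<bind>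
      (\<lambda>(x', b, c). if b then mf_loop n k x y (t + c) else return_spmf (x', t + c))" for t
    by (rule mf_loop_unfold)
  show "measure_pmf.prob (round_pmf n k x y) {(x', b, c). b} \<le> 1/2"
    by (rule round_restart_le_half)
  show "real c \<le> 1 + 2 * log 2 (real n)" if "(x', b, c) \<in> set_pmf (round_pmf n k x y)" for x' b c
    using that tests_cost_le num_tests_le[of n] n_ge_4 by (force simp: set_round_pmf)
qed

lemma measure_moveFirst: "measure (measure_spmf (moveFirst n k x y)) A = Pr 0 A"
  by (simp add: moveFirst_def Pr_def)

lemma moveFirst_cost_tail:
  "1 - measure (measure_spmf (moveFirst n k x y)) {(x', T). real T \<le> t} \<le> geom_tail (1 + 2 * log 2 n) t"
  using cost_tail[of 0 t] by (simp add: measure_moveFirst)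

lemma moveFirst_conditional_cost_tail:
  "measure (measure_spmf (moveFirst n k x y)) {(x', T). real T > t \<and> dd n x' = k + 1}
     \<le> geom_tail (1 + 2 * log 2 n) t * measure (measure_spmf (moveFirst n k x y)) {(x', T). dd n x' = k + 1}"
  using tail_bound[of 0 t "\<lambda>x'. dd n x' = k + 1"] by (simp add: measure_moveFirst)

text \<open>Part (ii): the output is a good string except with probability \<open>2/n\<^sup>2 \<le> 2 log\<^sub>2 n / n\<^sup>2\<close>.\<close>
lemma moveFirst_success:
  "1 - 2 * log 2 n / real n ^ 2 \<le> measure (measure_spmf (moveFirst n k x y))
     {(x', T). dd n x' = k + 1 \<and> hamming x x' = 1 \<and> hamming x' y = 2 * k + 1}"
proof -
  have "exit_prob (\<lambda>x'. \<not> good x') \<le> 1 / real n ^ 2"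
    using round_bad_exit half_pow_num_tests[of n] n_ge_4 by (simp add: exit_prob_def)
  moreover have "2 / real n ^ 2 \<le> 2 * log 2 n / real n ^ 2"
    using n_ge_4 by (intro divide_right_mono) auto
  ultimately show ?thesis
    using exit_law_lower[of good 0] by (simp add: measure_moveFirst good_def)
qed

end

theorem lemma13:
  fixes n k :: nat and x y :: "bool list"
  assumes "even n" and "n \<ge> 4" and "1 \<le> k" and "k \<le> n div 2 - 1"
  shows "unbiased2 n flip_agree \<and> unbiased2 n (flip_differ (k - 1))
    \<and> (opposing_pair n k x y \<longrightarrow>
      (\<forall>t::real.
         1 - measure (measure_spmf (moveFirst n k x y)) {(x', T). real T \<le> t}
         \<le> measure_pmf.prob (geometric_pmf (1/2)) {m. (1 + 2 * log 2 n) * real (Suc m) > t})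
      \<and> (\<forall>t::real.
         measure (measure_spmf (moveFirst n k x y)) {(x', T). real T > t \<and> dd n x' = k + 1}
         \<le> measure_pmf.prob (geometric_pmf (1/2)) {m. (1 + 2 * log 2 n) * real (Suc m) > t}
            * measure (measure_spmf (moveFirst n k x y)) {(x', T). dd n x' = k + 1})
      \<and> measure (measure_spmf (moveFirst n k x y))
          {(x', T). dd n x' = k + 1 \<and> hamming x x' = 1 \<and> hamming x' y = 2 * k + 1}
        \<ge> 1 - 2 * log 2 n / real n ^ 2)"
proof -
  have setting: "opposing_setting n k x y" if "opposing_pair n k x y"
    using assms that by unfold_locales
  show ?thesis
    using unbiased_flip_agree[of n] unbiased_flip_differ[of n "k - 1"]
      opposing_setting.moveFirst_cost_tail[OF setting]
      opposing_setting.moveFirst_conditional_cost_tail[OF setting]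
      opposing_setting.moveFirst_success[OF setting]
    unfolding geom_tail_def by blast
qed

end
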